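(* For every BIMS channel with capacity $C$ and every $R\ge0$, the expurgated exponent satisfies $$E_{\rm ex}^{\rm bsc}(R;C)\le E_{\rm ex}(R)\le E_{\rm ex}^{\rm bec}(R;C).$$
   Context: A BIMS (binary-input memoryless symmetric) channel is a memoryless channel with input alphabet $\{x_0,x_1\}$, finite output alphabet $\mathcal Y$ and transition probabilities $P_{Y|X}(y|x)$. It is symmetric in Gallager's sense: the columns of the $2\times|\mathcal Y|$ transition matrix (rows indexed by inputs) can be partitioned into submatrices such that, in each submatrix, every row is a permutation of every other row and every column is a permutation of every other column. The capacity $C$ is $I(X;Y)$ under equiprobable inputs, in bits, and logarithms are base 2. The Bhattacharyya parameter is $Z=\sum_y\sqrt{P_{Y|X}(y|x_0)P_{Y|X}(y|x_1)}$. For $\rho\ge1$ and $Z\in[0,1]$, let $$E_x(\rho;Z)=-\rho\log\frac{1+Z^{1/\rho}}{2},\qquad E_{\rm ex}(R)=\sup_{\rho\ge1}\bigl(E_x(\rho;Z)-\rho R\bigr).$$ Define $$E_{\rm ex}^{\rm bec}(R;C)=\sup_{\rho\ge1}\bigl(E_x(\rho;1-C)-\rho R\bigr),\qquad E_{\rm ex}^{\rm bsc}(R;C)=\sup_{\rho\ge1}\bigl(E_x(\rho;2\sqrt{\varepsilon(1-\varepsilon)})-\rho R\bigr),$$ where $\varepsilon=h^{-1}(1-C)$, $h$ is the binary entropy function and $h^{-1}$ its inverse on $[0,\tfrac12]$. These are the expurgated exponents of the BEC and BSC of capacity $C$. *)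

theory Defs
  imports "HOL-Analysis.Analysis" "HOL-Combinatorics.Permutations" "HOL-Library.Multiset"
begin

text \<open>A binary-input channel with finite output alphabet (a finite type 'y).
  Inputs: x0 = False, x1 = True.  W x y = P(Y=y | X=x).\<close>

definition channel :: "(bool \<Rightarrow> 'y::finite \<Rightarrow> real) \<Rightarrow> bool" where
  "channel W \<longleftrightarrow> (\<forall>x y. 0 \<le> W x y) \<and> (\<forall>x. (\<Sum>y\<in>UNIV. W x y) = 1)"

text \<open>Symmetry in Gallager's sense: the columns (outputs) can be partitioned into blocks
  such that in each block every row is a permutation of every other row and every
  column is a permutation of every other column.\<close>

definition gallager_symmetric :: "(bool \<Rightarrow> 'y::finite \<Rightarrow> real) \<Rightarrow> bool" where
  "gallager_symmetric W \<longleftrightarrow>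
     (\<exists>P. partition_on (UNIV :: 'y set) P \<and>
       (\<forall>B\<in>P.
          (\<forall>x x'. \<exists>\<sigma>. \<sigma> permutes B \<and> (\<forall>y\<in>B. W x' y = W x (\<sigma> y))) \<and>
          (\<forall>y\<in>B. \<forall>y'\<in>B. {# W False y, W True y #} = {# W False y', W True y' #})))"

definition BIMS :: "(bool \<Rightarrow> 'y::finite \<Rightarrow> real) \<Rightarrow> bool" where
  "BIMS W \<longleftrightarrow> channel W \<and> gallager_symmetric W"

text \<open>Capacity: I(X;Y) in bits under equiprobable inputs (convention 0 log 0 = 0).\<close>

definition capacity :: "(bool \<Rightarrow> 'y::finite \<Rightarrow> real) \<Rightarrow> real" where
  "capacity W = (\<Sum>y\<in>UNIV. \<Sum>x\<in>UNIV.
      (if W x y = 0 then 0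
       else (1/2) * W x y * log 2 (W x y / ((W False y + W True y) / 2))))"

definition bhattacharyya :: "(bool \<Rightarrow> 'y::finite \<Rightarrow> real) \<Rightarrow> real" where
  "bhattacharyya W = (\<Sum>y\<in>UNIV. sqrt (W False y * W True y))"

definition bin_entropy :: "real \<Rightarrow> real" where
  "bin_entropy p = (if p = 0 \<or> p = 1 then 0 else - p * log 2 p - (1 - p) * log 2 (1 - p))"

definition bin_entropy_inv :: "real \<Rightarrow> real" where
  "bin_entropy_inv t = (THE p. 0 \<le> p \<and> p \<le> 1/2 \<and> bin_entropy p = t)"

definition Ex :: "real \<Rightarrow> real \<Rightarrow> real" where
  "Ex \<rho> Z = - \<rho> * log 2 ((1 + Z powr (1 / \<rho>)) / 2)"

text \<open>Expurgated exponent for a given Bhattacharyya parameter; valued in the extended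
  reals since the supremum may be +\<infinity> (e.g. Z = 0).\<close>

definition Eex_Z :: "real \<Rightarrow> real \<Rightarrow> ereal" where
  "Eex_Z Z R = (SUP \<rho>\<in>{1..}. ereal (Ex \<rho> Z - \<rho> * R))"

definition Eex :: "(bool \<Rightarrow> 'y::finite \<Rightarrow> real) \<Rightarrow> real \<Rightarrow> ereal" where
  "Eex W R = Eex_Z (bhattacharyya W) R"

definition Eex_bec :: "real \<Rightarrow> real \<Rightarrow> ereal" where
  "Eex_bec R C = Eex_Z (1 - C) R"

definition Eex_bsc :: "real \<Rightarrow> real \<Rightarrow> ereal" where
  "Eex_bsc R C = (let \<epsilon> = bin_entropy_inv (1 - C)
                  in Eex_Z (2 * sqrt (\<epsilon> * (1 - \<epsilon>))) R)"

end

theory Submission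
  imports Defs "HOL-Real_Asymp.Real_Asymp"
begin

(*
  Every binary-input channel is a mixture of binary symmetric
  channels: output y occurs with probability w(y) = (W(x0,y) + W(x1,y))/2 and,
  conditioned on y, behaves like a BSC with crossover q(y) in [0,1/2].  Both
  quantities of interest are averages over this mixture:
      Z = sum_y w(y) z(q(y))   and   1 - C = sum_y w(y) h(q(y)),
  where z(p) = 2 sqrt(p(1-p)) and h is the binary entropy.  The key analytic fact is that z, viewed as
  a function of t = h(p) on [0,1/2], is concave: its slope dz/dh equals
  F((1-p)/p) with F(x) = (x-1)/(sqrt x ln x) increasing on (1,oo).  Hence z lies
  below each of its tangent lines in the h-parametrisation, which gives
    (a) h(p) <= z(p), h in bits (the chord of z o h^-1 from the noiseless to the
        useless BSC), so 1 - C <= Z, and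
    (b) Jensen: Z <= z(h^-1(1 - C)) = 2 sqrt(eps(1-eps)).
  Since E_x(rho; Z) is antitone in Z, the expurgated exponent is antitone in Z,
  and (a), (b) yield the upper and lower bound of the theorem.
*)

subsection \<open>Binary entropy and Bhattacharyya parameter of a BSC\<close>

definition hnat :: "real \<Rightarrow> real" where
  "hnat p = - p * ln p - (1 - p) * ln (1 - p)"

definition zbsc :: "real \<Rightarrow> real" where
  "zbsc p = 2 * sqrt (p * (1 - p))"

lemma hnat_0 [simp]: "hnat 0 = 0"
  by (simp add: hnat_def)

lemma hnat_half: "hnat (1/2) = ln 2"
  by (simp add: hnat_def ln_div)

lemma hnat_sym: "hnat (1 - p) = hnat p"
  by (simp add: hnat_def algebra_simps)

lemma zbsc_0 [simp]: "zbsc 0 = 0"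
  by (simp add: zbsc_def)

lemma zbsc_half: "zbsc (1/2) = 1"
proof -
  have "sqrt ((1/2::real) * (1 - 1/2)) = 1/2"
    by (rule real_sqrt_unique) (simp_all add: power2_eq_square)
  thus ?thesis by (simp add: zbsc_def)
qed

lemma zbsc_sym: "zbsc (1 - p) = zbsc p"
  by (simp add: zbsc_def mult.commute)

text \<open>z(p) is at most 1, by the AM-GM inequality p(1-p) \<le> 1/4.\<close>

lemma zbsc_le_1: "zbsc p \<le> 1"
proof -
  have "p * (1 - p) \<le> (1/2) ^ 2"
    using zero_le_power2[of "2 * p - 1"] by (simp add: power2_eq_square algebra_simps)
  hence "sqrt (p * (1 - p)) \<le> sqrt ((1/2) ^ 2)"
    by (rule real_sqrt_le_mono)
  hence "sqrt (p * (1 - p)) \<le> 1/2"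
    by simp
  thus ?thesis by (simp add: zbsc_def)
qed

lemma hnat_deriv:
  assumes "0 < p" "p < 1"
  shows "(hnat has_real_derivative (ln (1 - p) - ln p)) (at p)"
proof -
  have "(hnat has_real_derivative
          (- (ln p + p * (1/p)) - (- ln (1 - p) + (1 - p) * (- 1 / (1 - p))))) (at p)"
    unfolding hnat_def[abs_def] using assms by (auto intro!: derivative_eq_intros)
  thus ?thesis using assms by simp
qed

lemma zbsc_deriv:
  assumes "0 < p" "p < 1"
  shows "(zbsc has_real_derivative ((1 - 2 * p) / sqrt (p * (1 - p)))) (at p)"
proof -
  have pos: "0 < p * (1 - p)" using assms by simp
  hence "0 < sqrt (p * (1 - p))" by simp
  moreover have "(zbsc has_real_derivative
          2 * (inverse (sqrt (p * (1 - p))) / 2 * (1 * (1 - p) + (0 - 1) * p))) (at p)"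
    unfolding zbsc_def[abs_def] using pos by (auto intro!: derivative_eq_intros)
  moreover have "2 * (inverse S / 2 * (1 * (1 - p) + (0 - 1) * p)) = (1 - 2 * p) / S" for S :: real
    by (cases "S = 0") (simp_all add: field_simps)
  ultimately show ?thesis by simp
qed

lemma hnat_deriv_pos: "0 < p \<Longrightarrow> p < 1/2 \<Longrightarrow> 0 < ln (1 - p) - ln (p::real)"
  by (simp add: ln_less_cancel_iff)

text \<open>h is continuous on [0,1/2], including at 0 where x ln x \<rightarrow> 0.\<close>

lemma hnat_continuous: "continuous_on {0..1/2} hnat"
proof (rule continuous_on_IccI)
  show "(hnat \<longlongrightarrow> hnat 0) (at_right 0)"
    unfolding hnat_def[abs_def] by simp real_asymp
  show "(hnat \<longlongrightarrow> hnat (1/2)) (at_left (1/2))"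
    using DERIV_isCont[OF hnat_deriv[of "1/2"]] by (simp add: isCont_def filterlim_at_split)
  show "hnat \<midarrow>x\<rightarrow> hnat x" if "0 < x" "x < 1/2" for x
    using DERIV_isCont[OF hnat_deriv[of x]] that by (simp add: isCont_def)
qed simp

lemma hnat_strict_mono:
  assumes "0 \<le> a" "a < b" "b \<le> 1/2"
  shows "hnat a < hnat b"
proof (rule DERIV_pos_imp_increasing_open[OF assms(2)])
  fix x assume "a < x" "x < b"
  hence "0 < x" "x < 1/2" using assms by auto
  thus "\<exists>y. (hnat has_real_derivative y) (at x) \<and> 0 < y"
    using hnat_deriv[of x] hnat_deriv_pos[of x] by auto
next
  show "continuous_on {a..b} hnat"
    using hnat_continuous by (rule continuous_on_subset) (use assms in auto)
qed

lemma hnat_range: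
  assumes "0 \<le> p" "p \<le> 1/2"
  shows "0 \<le> hnat p \<and> hnat p \<le> ln 2"
proof -
  have "hnat 0 \<le> hnat p"
    using hnat_strict_mono[of 0 p] assms by (cases "p = 0") auto
  moreover have "hnat p \<le> hnat (1/2)"
    using hnat_strict_mono[of p "1/2"] assms by (metis order_le_less)
  ultimately show ?thesis by (simp add: hnat_half)
qed

lemma hnat_surj:
  assumes "0 \<le> t" "t \<le> ln 2"
  obtains p where "0 \<le> p" "p \<le> 1/2" "hnat p = t"
  using IVT'[of hnat 0 t "1/2"] assms hnat_half hnat_continuous by auto

subsection \<open>Concavity of z as a function of the entropy\<close>

lemma ln_ge_ratio:
  fixes x :: real
  assumes "1 \<le> x"
  shows "2 * (x - 1) / (x + 1) \<le> ln x"
proof -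
  let ?f = "\<lambda>x::real. ln x - 2 * (x - 1) / (x + 1)"
  have "?f 1 \<le> ?f x"
  proof (rule DERIV_nonneg_imp_nondecreasing[OF assms])
    fix t :: real assume t: "1 \<le> t" "t \<le> x"
    have "(?f has_real_derivative (1/t - (2 * (t + 1) - 2 * (t - 1)) / (t + 1)^2)) (at t)"
      using t by (auto intro!: derivative_eq_intros simp: power2_eq_square)
    moreover have "1/t - (2 * (t + 1) - 2 * (t - 1)) / (t + 1)^2 = (t - 1)^2 / (t * (t + 1)^2)"
      using t by (simp add: divide_simps power2_eq_square) (simp add: algebra_simps)
    ultimately show "\<exists>y. (?f has_real_derivative y) (at t) \<and> 0 \<le> y"
      using t by auto
  qed
  thus ?thesis by simp
qed

text \<open>The slope profile F(x) = (x-1)/(\<surd>x ln x): the slope dz/dh at p is F((1-p)/p).\<close>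

definition slope_profile :: "real \<Rightarrow> real" where
  "slope_profile x = (x - 1) / (sqrt x * ln x)"

text \<open>F is increasing on (1,\<infinity>); its derivative has the sign of (x+1) ln x - 2(x-1).\<close>

lemma slope_profile_mono:
  assumes "1 < a" "a \<le> b"
  shows "slope_profile a \<le> slope_profile b"
proof (rule DERIV_nonneg_imp_nondecreasing[OF assms(2)])
  fix t :: real assume "a \<le> t" "t \<le> b"
  hence t: "1 < t" using assms by simp
  define s where "s = sqrt t"
  have s: "0 < s" "t = s * s" using t by (auto simp: s_def)
  have l: "0 < ln t" using t by simp
  define d where "d = ((t + 1) * ln t - 2 * (t - 1)) / (2 * s * (s * ln t)^2)"
  have "(slope_profile has_real_derivative
          (s * ln t - (t - 1) * (ln t / (2 * s) + s / t)) / (s * ln t)^2) (at t)"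
    unfolding slope_profile_def[abs_def] s_def using t l
    by (auto intro!: derivative_eq_intros simp: field_simps power2_eq_square)
  moreover have "(s * ln t - (t - 1) * (ln t / (2 * s) + s / t)) / (s * ln t)^2 = d"
    unfolding d_def using s l by (simp add: divide_simps) (simp add: algebra_simps power2_eq_square)
  moreover have "0 \<le> d"
    using ln_ge_ratio[of t] t s l by (simp add: d_def field_simps)
  ultimately show "\<exists>y. (slope_profile has_real_derivative y) (at t) \<and> 0 \<le> y"
    by blast
qed

definition zbsc_slope_at :: "real \<Rightarrow> real" where
  "zbsc_slope_at p = slope_profile ((1 - p) / p)"

lemma zbsc_slope:
  assumes "0 < p" "p < 1/2"
  shows "(1 - 2 * p) / sqrt (p * (1 - p)) = zbsc_slope_at p * (ln (1 - p) - ln p)"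
proof -
  define a where "a = sqrt p"
  define b where "b = sqrt (1 - p)"
  have ab: "p = a * a" "1 - p = b * b" "0 < a" "0 < b" using assms by (auto simp: a_def b_def)
  have "ln ((1 - p) / p) > 0" using assms by simp
  hence "slope_profile ((1 - p) / p) * (ln (1 - p) - ln p) = ((1 - p) / p - 1) / sqrt ((1 - p) / p)"
    using assms by (simp add: slope_profile_def ln_div)
  also have "\<dots> = (b * b / (a * a) - 1) / (b / a)"
    using ab by (simp add: a_def b_def real_sqrt_divide)
  also have "\<dots> = (b * b - a * a) / (a * b)"
    using ab(3,4) by (simp add: field_simps)
  also have "\<dots> = (1 - 2 * p) / sqrt (p * (1 - p))"
  proof -
    have "sqrt (p * (1 - p)) = a * b" by (simp add: a_def b_def real_sqrt_mult)
    moreover have "1 - 2 * p = b * b - a * a" using ab(1,2) by linarith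
    ultimately show ?thesis by simp
  qed
  finally show ?thesis by (simp add: zbsc_slope_at_def)
qed

text \<open>The slope decreases on (0,1/2): the likelihood ratio (1-p)/p decreases while the
  slope profile increases.  This is the concavity of z as a function of h.\<close>

lemma zbsc_slope_at_antitone:
  assumes "0 < x" "x \<le> y" "y < 1/2"
  shows "zbsc_slope_at y \<le> zbsc_slope_at x"
  unfolding zbsc_slope_at_def using assms by (intro slope_profile_mono) (simp_all add: field_simps)

text \<open>Tangent-line bound in a reparametrisation: if f' = s \<cdot> g' with g nondecreasing and
  the slope s antitone on (a,b), then f lies below its tangent at p0 when both are
  read as functions of g, i.e. f is a concave function of g.\<close>

lemma tangent_bound_reparam:
  fixes f g g' s :: "real \<Rightarrow> real"
  assumes f_cont: "continuous_on {a..b} f" and g_cont: "continuous_on {a..b} g"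
    and f': "\<And>x. a < x \<Longrightarrow> x < b \<Longrightarrow> (f has_real_derivative s x * g' x) (at x)"
    and g': "\<And>x. a < x \<Longrightarrow> x < b \<Longrightarrow> (g has_real_derivative g' x) (at x)"
    and g'_nonneg: "\<And>x. a < x \<Longrightarrow> x < b \<Longrightarrow> 0 \<le> g' x"
    and s_anti: "\<And>x y. a < x \<Longrightarrow> x \<le> y \<Longrightarrow> y < b \<Longrightarrow> s y \<le> s x"
    and p0: "a < p0" "p0 < b" and p: "a \<le> p" "p \<le> b"
  shows "f p \<le> f p0 + s p0 * (g p - g p0)"
proof -
  define G where "G x = f p0 + s p0 * (g x - g p0) - f x" for x
  have G': "(G has_real_derivative (s p0 - s x) * g' x) (at x)" if "a < x" "x < b" for x
  proof -
    have "(G has_real_derivative 0 + s p0 * (g' x - 0) - s x * g' x) (at x)"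
      unfolding G_def[abs_def] using that by (intro DERIV_diff DERIV_add DERIV_const DERIV_cmult f' g')
    thus ?thesis by (simp add: algebra_simps)
  qed
  have G_cont: "continuous_on {u..v} G" if "a \<le> u" "v \<le> b" for u v
    using continuous_on_subset[OF f_cont] continuous_on_subset[OF g_cont] that
    unfolding G_def[abs_def] by (intro continuous_intros) auto
  have "G p0 \<le> G p"
  proof (cases "p \<le> p0")
    case True
    show ?thesis
    proof (rule DERIV_nonpos_imp_decreasing_open[OF True _ G_cont])
      fix x assume x: "p < x" "x < p0"
      have "(s p0 - s x) * g' x \<le> 0"
        using x s_anti[of x p0] g'_nonneg[of x] p p0 by (intro mult_nonpos_nonneg) auto
      moreover have "(G has_real_derivative (s p0 - s x) * g' x) (at x)"
        using x p p0 by (intro G') auto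
      ultimately show "\<exists>y. (G has_real_derivative y) (at x) \<and> y \<le> 0"
        by blast
    qed (use p p0 in auto)
  next
    case False
    show ?thesis
    proof (rule DERIV_nonneg_imp_increasing_open[of p0 p, OF _ _ G_cont])
      fix x assume x: "p0 < x" "x < p"
      have "0 \<le> (s p0 - s x) * g' x"
        using x s_anti[of p0 x] g'_nonneg[of x] p p0 by (intro mult_nonneg_nonneg) auto
      moreover have "(G has_real_derivative (s p0 - s x) * g' x) (at x)"
        using x p p0 by (intro G') auto
      ultimately show "\<exists>y. (G has_real_derivative y) (at x) \<and> 0 \<le> y"
        by blast
    qed (use False p p0 in auto)
  qed
  thus ?thesis by (simp add: G_def)
qed

text \<open>Tangent-line bound for z as a function of h on [0,1/2], touching at p0 \<in> (0,1/2].
  At p0 = 1/2 the slope is 0 and the bound is just z \<le> 1.\<close>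

lemma zbsc_tangent:
  assumes p0: "0 < p0" "p0 \<le> 1/2" and p: "0 \<le> p" "p \<le> 1/2"
  shows "zbsc p \<le> zbsc p0 + zbsc_slope_at p0 * (hnat p - hnat p0)"
proof (cases "p0 = 1/2")
  case True
  have "zbsc_slope_at (1/2) = 0" by (simp add: zbsc_slope_at_def slope_profile_def)
  thus ?thesis unfolding True using zbsc_le_1[of p] by (simp add: zbsc_half)
next
  case False
  show ?thesis
  proof (rule tangent_bound_reparam[where a = 0 and b = "1/2" and g' = "\<lambda>x. ln (1 - x) - ln x"])
    show "continuous_on {0..1/2} zbsc"
      unfolding zbsc_def[abs_def] by (intro continuous_intros)
    show "(zbsc has_real_derivative zbsc_slope_at x * (ln (1 - x) - ln x)) (at x)"
      if "0 < x" "x < 1/2" for x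
      using zbsc_deriv[of x] zbsc_slope[of x] that by simp
  qed (use hnat_continuous hnat_deriv hnat_deriv_pos zbsc_slope_at_antitone False p0 p
       in \<open>auto intro: less_imp_le\<close>)
qed

text \<open>Consequence (a): h(p) \<le> z(p) (in bits), the concave function z \<circ> h\<inverse> lies above
  its chord through (0,0) and (ln 2, 1).\<close>

lemma hnat_le_zbsc:
  assumes "0 \<le> p" "p \<le> 1/2"
  shows "hnat p / ln 2 \<le> zbsc p"
proof (cases "p = 0")
  case False
  define k where "k = zbsc_slope_at p"
  define t where "t = hnat p"
  define z where "z = zbsc p"
  have t: "0 \<le> t" "t \<le> ln 2" using hnat_range assms by (auto simp: t_def)
  have at_0: "k * t \<le> z"
    using zbsc_tangent[of p 0] assms False by (simp add: k_def t_def z_def)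
  have at_half: "1 - z \<le> k * (ln 2 - t)"
    using zbsc_tangent[of p "1/2"] assms False by (simp add: k_def t_def z_def zbsc_half hnat_half)
  have "t * (1 - z) \<le> (ln 2 - t) * z"
  proof -
    have "t * (1 - z) \<le> t * (k * (ln 2 - t))" using at_half t by (intro mult_left_mono) auto
    also have "\<dots> = (ln 2 - t) * (k * t)" by (simp add: algebra_simps)
    also have "\<dots> \<le> (ln 2 - t) * z" using at_0 t by (intro mult_left_mono) auto
    finally show ?thesis .
  qed
  hence "t \<le> z * ln 2" by (simp add: algebra_simps)
  thus ?thesis by (simp add: t_def z_def divide_simps)
qed simp

text \<open>Consequence (b), Jensen's inequality for the concave function z \<circ> h\<inverse>: a mixture
  of BSCs has Bhattacharyya parameter at most that of the BSC with the same average
  entropy.\<close>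

lemma zbsc_jensen:
  fixes w q :: "'a \<Rightarrow> real"
  assumes fin: "finite Y" and w: "\<And>y. y \<in> Y \<Longrightarrow> 0 \<le> w y" and w_sum: "(\<Sum>y\<in>Y. w y) = 1"
    and q: "\<And>y. y \<in> Y \<Longrightarrow> 0 \<le> q y \<and> q y \<le> 1/2"
    and p0: "0 \<le> p0" "p0 \<le> 1/2" and avg: "hnat p0 = (\<Sum>y\<in>Y. w y * hnat (q y))"
  shows "(\<Sum>y\<in>Y. w y * zbsc (q y)) \<le> zbsc p0"
proof (cases "p0 = 0")
  case True
  text \<open>Zero average entropy forces every component with positive weight to be noiseless.\<close>
  have entropy_0: "\<forall>y\<in>Y. w y * hnat (q y) = 0"
    using avg True w q hnat_range by (subst sum_nonneg_eq_0_iff[OF fin, symmetric]) auto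
  have "w y * zbsc (q y) = 0" if y: "y \<in> Y" for y
  proof -
    have "q y = 0" if "hnat (q y) = 0"
      using hnat_strict_mono[of 0 "q y"] q[OF y] that by force
    thus ?thesis using entropy_0 y by auto
  qed
  hence "(\<Sum>y\<in>Y. w y * zbsc (q y)) = 0" by (simp add: sum.neutral)
  thus ?thesis using True by simp
next
  case False
  let ?k = "zbsc_slope_at p0"
  have "(\<Sum>y\<in>Y. w y * zbsc (q y)) \<le> (\<Sum>y\<in>Y. w y * (zbsc p0 + ?k * (hnat (q y) - hnat p0)))"
    using False p0 q w by (intro sum_mono mult_left_mono zbsc_tangent) auto
  also have "\<dots> = zbsc p0 * (\<Sum>y\<in>Y. w y) + ?k * ((\<Sum>y\<in>Y. w y * hnat (q y)) - hnat p0 * (\<Sum>y\<in>Y. w y))"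
    by (simp add: algebra_simps sum.distrib sum_distrib_left sum_subtractf sum_distrib_right)
  also have "\<dots> = zbsc p0" using w_sum avg by simp
  finally show ?thesis .
qed

subsection \<open>A binary-input channel as a mixture of BSCs\<close>

text \<open>Output y occurs with probability out_weight W y under equiprobable inputs; given y,
  the posterior of the input is that of a BSC with crossover probability crossover W y.\<close>

definition out_weight :: "(bool \<Rightarrow> 'y \<Rightarrow> real) \<Rightarrow> 'y \<Rightarrow> real" where
  "out_weight W y = (W False y + W True y) / 2"

definition crossover :: "(bool \<Rightarrow> 'y \<Rightarrow> real) \<Rightarrow> 'y \<Rightarrow> real" where
  "crossover W y = (let p = W False y / (W False y + W True y) in min p (1 - p))"

lemma output_information:
  assumes a: "0 \<le> a" and b: "0 \<le> b"
  shows "(if a = 0 then 0 else 1/2 * a * log 2 (a / ((a + b) / 2)))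
       + (if b = 0 then 0 else 1/2 * b * log 2 (b / ((a + b) / 2)))
       = (a + b) / 2 * (1 - hnat (a / (a + b)) / ln 2)"
proof (cases "a + b = 0")
  case True
  thus ?thesis using a b by simp
next
  case False
  hence s: "0 < a + b" using a b by simp
  have each_term: "(if x = 0 then 0 else 1/2 * x * log 2 (x / ((a + b) / 2)))
            = x / 2 + x * ln (x / (a + b)) / (2 * ln 2)" if "0 \<le> x" for x
  proof (cases "x = 0")
    case False
    hence "ln (x / ((a + b) / 2)) = ln 2 + ln (x / (a + b))"
      using that s by (simp add: ln_div ln_mult)
    thus ?thesis using False by (simp add: log_def field_simps)
  qed simp
  have "1 - a / (a + b) = b / (a + b)" using s by (simp add: field_simps)
  hence "(a + b) * hnat (a / (a + b))
      = (a + b) * (- (a / (a + b)) * ln (a / (a + b)) - b / (a + b) * ln (b / (a + b)))"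
    by (simp add: hnat_def)
  also have "\<dots> = - a * ln (a / (a + b)) - b * ln (b / (a + b))"
  proof -
    have "S * (- (a / S) * u - b / S * v) = - a * u - b * v" if "S \<noteq> 0" for S u v :: real
      using that by (simp add: field_simps)
    thus ?thesis using s by simp
  qed
  finally have "(a + b) * hnat (a / (a + b)) = - a * ln (a / (a + b)) - b * ln (b / (a + b))" .
  thus ?thesis using each_term[OF a] each_term[OF b] s by (simp add: field_simps)
qed

lemma output_bhattacharyya:
  assumes a: "0 \<le> a" and b: "0 \<le> b"
  shows "sqrt (a * b) = (a + b) / 2 * zbsc (a / (a + b))"
proof (cases "a + b = 0")
  case True
  thus ?thesis using a b by simp
next
  case False
  hence s: "0 < a + b" using a b by simp
  have "a / (a + b) * (1 - a / (a + b)) = (a * b) / (a + b)^2"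
    using s by (simp add: field_simps power2_eq_square)
  thus ?thesis using s by (simp add: zbsc_def real_sqrt_divide)
qed

lemma crossover_range: "0 \<le> W False y \<Longrightarrow> 0 \<le> W True y \<Longrightarrow> 0 \<le> crossover W y \<and> crossover W y \<le> 1/2"
  by (auto simp: crossover_def Let_def min_def divide_simps)

lemma hnat_zbsc_crossover:
  "hnat (crossover W y) = hnat (W False y / (W False y + W True y))"
  "zbsc (crossover W y) = zbsc (W False y / (W False y + W True y))"
  by (simp_all add: crossover_def Let_def min_def hnat_sym zbsc_sym)

lemma channel_bsc_mixture:
  fixes W :: "bool \<Rightarrow> 'y::finite \<Rightarrow> real"
  assumes "channel W"
  shows "(\<Sum>y\<in>UNIV. out_weight W y) = 1"
    and "0 \<le> out_weight W y"
    and "0 \<le> crossover W y \<and> crossover W y \<le> 1/2"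
    and "bhattacharyya W = (\<Sum>y\<in>UNIV. out_weight W y * zbsc (crossover W y))"
    and "capacity W = 1 - (\<Sum>y\<in>UNIV. out_weight W y * hnat (crossover W y)) / ln 2"
proof -
  have nonneg: "\<And>x y. 0 \<le> W x y" and total: "\<And>x. (\<Sum>y\<in>UNIV. W x y) = 1"
    using assms unfolding channel_def by auto
  show w_sum: "(\<Sum>y\<in>UNIV. out_weight W y) = 1"
    using total[of False] total[of True]
    by (simp add: out_weight_def sum_divide_distrib[symmetric] sum.distrib)
  show "0 \<le> out_weight W y" using nonneg by (simp add: out_weight_def)
  show "0 \<le> crossover W y \<and> crossover W y \<le> 1/2" by (intro crossover_range nonneg)
  show "bhattacharyya W = (\<Sum>y\<in>UNIV. out_weight W y * zbsc (crossover W y))"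
    unfolding bhattacharyya_def hnat_zbsc_crossover out_weight_def
    using nonneg by (intro sum.cong refl output_bhattacharyya)
  have "capacity W = (\<Sum>y\<in>UNIV. out_weight W y * (1 - hnat (crossover W y) / ln 2))"
    unfolding capacity_def hnat_zbsc_crossover out_weight_def
    using nonneg by (intro sum.cong refl) (simp add: UNIV_bool output_information)
  also have "\<dots> = 1 - (\<Sum>y\<in>UNIV. out_weight W y * hnat (crossover W y)) / ln 2"
    using w_sum by (simp add: algebra_simps sum_subtractf sum_divide_distrib)
  finally show "capacity W = 1 - (\<Sum>y\<in>UNIV. out_weight W y * hnat (crossover W y)) / ln 2" .
qed

subsection \<open>Bhattacharyya parameter versus capacity\<close>

lemma capacity_bhattacharyya_bec:
  fixes W :: "bool \<Rightarrow> 'y::finite \<Rightarrow> real"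
  assumes "channel W"
  shows "0 \<le> 1 - capacity W" and "1 - capacity W \<le> bhattacharyya W"
proof -
  note mix = channel_bsc_mixture[OF assms]
  have "1 - capacity W = (\<Sum>y\<in>UNIV. out_weight W y * (hnat (crossover W y) / ln 2))"
    by (simp add: mix(5) sum_divide_distrib)
  moreover have "0 \<le> (\<Sum>y\<in>UNIV. out_weight W y * (hnat (crossover W y) / ln 2))"
    using mix(2,3) hnat_range by (intro sum_nonneg mult_nonneg_nonneg divide_nonneg_pos) auto
  moreover have "(\<Sum>y\<in>UNIV. out_weight W y * (hnat (crossover W y) / ln 2)) \<le> bhattacharyya W"
    unfolding mix(4) using mix(2,3) by (intro sum_mono mult_left_mono hnat_le_zbsc) auto
  ultimately show "0 \<le> 1 - capacity W" "1 - capacity W \<le> bhattacharyya W" by simp_all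
qed

lemma bin_entropy_hnat: "0 \<le> p \<Longrightarrow> p \<le> 1/2 \<Longrightarrow> bin_entropy p = hnat p / ln 2"
  unfolding bin_entropy_def hnat_def log_def by (auto simp: field_simps)

lemma bin_entropy_inv_eqI:
  assumes "0 \<le> p" "p \<le> 1/2" "hnat p = t * ln 2"
  shows "bin_entropy_inv t = p"
  unfolding bin_entropy_inv_def
proof (rule the_equality)
  show "0 \<le> p \<and> p \<le> 1/2 \<and> bin_entropy p = t" using assms bin_entropy_hnat by simp
next
  fix x assume x: "0 \<le> x \<and> x \<le> 1/2 \<and> bin_entropy x = t"
  hence "hnat x = hnat p" using assms bin_entropy_hnat[of x] by simp
  thus "x = p" using hnat_strict_mono[of x p] hnat_strict_mono[of p x] x assms
    by (cases x p rule: linorder_cases) auto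
qed

lemma bhattacharyya_le_bsc:
  fixes W :: "bool \<Rightarrow> 'y::finite \<Rightarrow> real"
  assumes "channel W"
  shows "bhattacharyya W \<le> zbsc (bin_entropy_inv (1 - capacity W))"
proof -
  note mix = channel_bsc_mixture[OF assms]
  define S where "S = (\<Sum>y\<in>UNIV. out_weight W y * hnat (crossover W y))"
  have "0 \<le> S"
    unfolding S_def using mix(2,3) hnat_range by (intro sum_nonneg mult_nonneg_nonneg) auto
  have "S \<le> (\<Sum>y\<in>UNIV. out_weight W y * ln 2)"
    unfolding S_def using mix(2,3) hnat_range by (intro sum_mono mult_left_mono) auto
  hence "S \<le> ln 2" by (simp add: sum_distrib_right[symmetric] mix(1))
  with \<open>0 \<le> S\<close> obtain p where p: "0 \<le> p" "p \<le> 1/2" "hnat p = S"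
    by (rule hnat_surj)
  have "bin_entropy_inv (1 - capacity W) = p"
    using p by (intro bin_entropy_inv_eqI) (simp_all add: mix(5) S_def)
  moreover have "bhattacharyya W \<le> zbsc p"
    unfolding mix(4) using p mix(1-3) by (intro zbsc_jensen) (simp_all add: S_def)
  ultimately show ?thesis by simp
qed

subsection \<open>Monotonicity of the expurgated exponent\<close>

lemma Ex_antitone:
  assumes "0 \<le> Z1" "Z1 \<le> Z2" "1 \<le> \<rho>"
  shows "Ex \<rho> Z2 \<le> Ex \<rho> Z1"
proof -
  have "Z1 powr (1/\<rho>) \<le> Z2 powr (1/\<rho>)" using assms by (intro powr_mono2) auto
  moreover have "0 < (1 + Z1 powr (1/\<rho>)) / 2" by (simp add: add_pos_nonneg)
  ultimately have "log 2 ((1 + Z1 powr (1/\<rho>)) / 2) \<le> log 2 ((1 + Z2 powr (1/\<rho>)) / 2)"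
    by (intro log_mono) auto
  thus ?thesis unfolding Ex_def using assms by (simp add: mult_left_mono)
qed

lemma Eex_Z_antitone:
  assumes "0 \<le> Z1" "Z1 \<le> Z2"
  shows "Eex_Z Z2 R \<le> Eex_Z Z1 R"
  unfolding Eex_Z_def
proof (rule SUP_mono)
  fix \<rho> :: real assume "\<rho> \<in> {1..}"
  thus "\<exists>\<rho>'\<in>{1..}. ereal (Ex \<rho> Z2 - \<rho> * R) \<le> ereal (Ex \<rho>' Z1 - \<rho>' * R)"
    using Ex_antitone[OF assms, of \<rho>] by (intro bexI[of _ \<rho>]) auto
qed

theorem mainTheorem9:
  fixes W :: "bool \<Rightarrow> 'y::finite \<Rightarrow> real" and R :: real
  assumes "BIMS W" and "R \<ge> 0"
  shows "Eex_bsc R (capacity W) \<le> Eex W R \<and> Eex W R \<le> Eex_bec R (capacity W)"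
proof
  have W: "channel W" using assms(1) by (simp add: BIMS_def)
  have Z_nonneg: "0 \<le> bhattacharyya W"
    using capacity_bhattacharyya_bec[OF W] by linarith
  show "Eex_bsc R (capacity W) \<le> Eex W R"
    unfolding Eex_bsc_def Eex_def Let_def
    using Z_nonneg bhattacharyya_le_bsc[OF W] by (intro Eex_Z_antitone) (simp_all add: zbsc_def)
  show "Eex W R \<le> Eex_bec R (capacity W)"
    unfolding Eex_def Eex_bec_def using capacity_bhattacharyya_bec[OF W] by (rule Eex_Z_antitone)
qed

end
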